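(* Let $\mathcal C$ be a $G$-category (the action need not be free). Then there is a weakly $G$-equivariant equivalence $\mathcal C\to(\mathcal C/G)\#G$, where $(\mathcal C/G)\#G$ carries the free $G$-action $\mu\cdot x^{(\alpha)}=x^{(\mu\alpha)}$, $\mu\cdot f=f$.
   Context: $\Bbbk$ is a commutative ring; all categories are $\Bbbk$-linear; $G$ is a group; a $G$-category is a category with a group homomorphism $G\to\operatorname{Aut}$, $\alpha\mapsto A_\alpha$, written $\alpha x,\alpha f$. A weakly $G$-equivariant functor is a pair $(F,\rho)$, $F$ a functor between $G$-categories and $\rho_\alpha\colon A_\alpha F\to FA_\alpha$ natural isomorphisms with $(\rho_\beta A_\alpha)(A_\beta\rho_\alpha)=\rho_{\beta\alpha}$. Orbit category $\mathcal C/G$: objects of $\mathcal C$; morphisms $x\to y$ are row- and column-finite families $(f_{\beta,\alpha})_{(\alpha,\beta)\in G\times G}$, $f_{\beta,\alpha}\in\mathcal C(\alpha x,\beta y)$, with $f_{\gamma\beta,\gamma\alpha}=\gamma(f_{\beta,\alpha})$; composition $(gf)_{\beta,\alpha}=\sum_\gamma g_{\beta,\gamma}f_{\gamma,\alpha}$. It is $G$-graded by $(\mathcal C/G)^\alpha(x,y):=P^{(1)}_{x,y}(\mathcal C(\alpha x,y))$ where $P^{(1)}_{x,y}\colon\bigoplus_\alpha\mathcal C(\alpha x,y)\to(\mathcal C/G)(x,y)$, $(f_\alpha)\mapsto(\mu(f_{\mu^{-1}\lambda}))_{(\lambda,\mu)}$, is bijective. For a $G$-graded category $\mathcal B$ (decompositions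 $\mathcal B(x,y)=\bigoplus_\alpha\mathcal B^\alpha(x,y)$ with $\mathcal B^\beta\cdot\mathcal B^\alpha\subseteq\mathcal B^{\beta\alpha}$), the smash product $\mathcal B\#G$ has objects $x^{(\alpha)}$ ($x\in\mathcal B$, $\alpha\in G$), $(\mathcal B\#G)(x^{(\alpha)},y^{(\beta)})=\mathcal B^{\beta^{-1}\alpha}(x,y)$, composition from $\mathcal B$. *)

theory Defs
  imports Main "HOL-Library.Function_Algebras"
begin

text \<open>
  A Bbbk-linear category: objects of type 'o, morphisms encoded in an abelian group 'm
  (the addition of the group is the addition of each hom-module, 0 is the zero morphism
  of every hom-module), hom-sets Hom x y, composition cmp g f (= g o f), identities,
  and scalar multiplication by the commutative ring 'k.
\<close>

record ('o, 'm, 'k) lincat =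
  Hom :: "'o \<Rightarrow> 'o \<Rightarrow> 'm set"
  cmp :: "'m \<Rightarrow> 'm \<Rightarrow> 'm"
  idt :: "'o \<Rightarrow> 'm"
  scl :: "'k \<Rightarrow> 'm \<Rightarrow> 'm"

definition lincat :: "('o, 'm::ab_group_add, 'k::comm_ring_1) lincat \<Rightarrow> bool" where
  "lincat C \<longleftrightarrow>
    (\<forall>x y. 0 \<in> Hom C x y
       \<and> (\<forall>f\<in>Hom C x y. \<forall>g\<in>Hom C x y. f + g \<in> Hom C x y)
       \<and> (\<forall>f\<in>Hom C x y. - f \<in> Hom C x y)
       \<and> (\<forall>a. \<forall>f\<in>Hom C x y. scl C a f \<in> Hom C x y)
       \<and> (\<forall>f\<in>Hom C x y. scl C 1 f = f)
       \<and> (\<forall>a b. \<forall>f\<in>Hom C x y. scl C (a * b) f = scl C a (scl C b f))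
       \<and> (\<forall>a b. \<forall>f\<in>Hom C x y. scl C (a + b) f = scl C a f + scl C b f)
       \<and> (\<forall>a. \<forall>f\<in>Hom C x y. \<forall>g\<in>Hom C x y. scl C a (f + g) = scl C a f + scl C a g))
  \<and> (\<forall>x. idt C x \<in> Hom C x x)
  \<and> (\<forall>x y z. \<forall>f\<in>Hom C x y. \<forall>g\<in>Hom C y z. cmp C g f \<in> Hom C x z)
  \<and> (\<forall>x y. \<forall>f\<in>Hom C x y. cmp C (idt C y) f = f \<and> cmp C f (idt C x) = f)
  \<and> (\<forall>w x y z. \<forall>f\<in>Hom C w x. \<forall>g\<in>Hom C x y. \<forall>h\<in>Hom C y z.
        cmp C h (cmp C g f) = cmp C (cmp C h g) f)
  \<and> (\<forall>x y z. \<forall>f\<in>Hom C x y. \<forall>f'\<in>Hom C x y. \<forall>g\<in>Hom C y z. \<forall>g'\<in>Hom C y z.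
        cmp C (g + g') f = cmp C g f + cmp C g' f
      \<and> cmp C g (f + f') = cmp C g f + cmp C g f'
      \<and> (\<forall>a. cmp C (scl C a g) f = scl C a (cmp C g f)
             \<and> cmp C g (scl C a f) = scl C a (cmp C g f)))"

definition lin_functor ::
  "('o1, 'm1::ab_group_add, 'k) lincat \<Rightarrow> ('o2, 'm2::ab_group_add, 'k) lincat
   \<Rightarrow> ('o1 \<Rightarrow> 'o2) \<Rightarrow> ('o1 \<Rightarrow> 'o1 \<Rightarrow> 'm1 \<Rightarrow> 'm2) \<Rightarrow> bool" where
  "lin_functor C D Fo Fm \<longleftrightarrow>
    (\<forall>x y. \<forall>f\<in>Hom C x y. Fm x y f \<in> Hom D (Fo x) (Fo y))
  \<and> (\<forall>x y z. \<forall>f\<in>Hom C x y. \<forall>g\<in>Hom C y z.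
        Fm x z (cmp C g f) = cmp D (Fm y z g) (Fm x y f))
  \<and> (\<forall>x. Fm x x (idt C x) = idt D (Fo x))
  \<and> (\<forall>x y. \<forall>f\<in>Hom C x y. \<forall>g\<in>Hom C x y. Fm x y (f + g) = Fm x y f + Fm x y g)
  \<and> (\<forall>a x y. \<forall>f\<in>Hom C x y. Fm x y (scl C a f) = scl D a (Fm x y f))"

definition is_iso :: "('o, 'm, 'k) lincat \<Rightarrow> 'o \<Rightarrow> 'o \<Rightarrow> 'm \<Rightarrow> bool" where
  "is_iso D x y f \<longleftrightarrow> f \<in> Hom D x y \<and>
     (\<exists>g\<in>Hom D y x. cmp D g f = idt D x \<and> cmp D f g = idt D y)"

definition nat_iso ::
  "('o1, 'm1, 'k) lincat \<Rightarrow> ('o2, 'm2, 'k) lincat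
   \<Rightarrow> ('o1 \<Rightarrow> 'o2) \<Rightarrow> ('o1 \<Rightarrow> 'o1 \<Rightarrow> 'm1 \<Rightarrow> 'm2)
   \<Rightarrow> ('o1 \<Rightarrow> 'o2) \<Rightarrow> ('o1 \<Rightarrow> 'o1 \<Rightarrow> 'm1 \<Rightarrow> 'm2)
   \<Rightarrow> ('o1 \<Rightarrow> 'm2) \<Rightarrow> bool" where
  "nat_iso C D F1o F1m F2o F2m eta \<longleftrightarrow>
    (\<forall>x. is_iso D (F1o x) (F2o x) (eta x))
  \<and> (\<forall>x y. \<forall>f\<in>Hom C x y. cmp D (F2m x y f) (eta x) = cmp D (eta y) (F1m x y f))"

definition equivalence ::
  "('o1, 'm1::ab_group_add, 'k) lincat \<Rightarrow> ('o2, 'm2::ab_group_add, 'k) lincat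
   \<Rightarrow> ('o1 \<Rightarrow> 'o2) \<Rightarrow> ('o1 \<Rightarrow> 'o1 \<Rightarrow> 'm1 \<Rightarrow> 'm2) \<Rightarrow> bool" where
  "equivalence C D Fo Fm \<longleftrightarrow> lin_functor C D Fo Fm \<and>
    (\<exists>Ho Hm eta eps. lin_functor D C Ho Hm
       \<and> nat_iso C C (\<lambda>x. x) (\<lambda>x y f. f)
                      (\<lambda>x. Ho (Fo x)) (\<lambda>x y f. Hm (Fo x) (Fo y) (Fm x y f)) eta
       \<and> nat_iso D D (\<lambda>u. Fo (Ho u)) (\<lambda>u v g. Fm (Ho u) (Ho v) (Hm u v g))
                      (\<lambda>u. u) (\<lambda>u v g. g) eps)"

text \<open>G-category: a group homomorphism alpha \<mapsto> A_alpha into the linear automorphisms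
  (the group G is a type of class group_add; the group product alpha beta is written alpha + beta).\<close>

definition Gcat ::
  "('o, 'm::ab_group_add, 'k::comm_ring_1) lincat \<Rightarrow> ('g::group_add \<Rightarrow> 'o \<Rightarrow> 'o)
   \<Rightarrow> ('g \<Rightarrow> 'o \<Rightarrow> 'o \<Rightarrow> 'm \<Rightarrow> 'm) \<Rightarrow> bool" where
  "Gcat C aO aM \<longleftrightarrow> lincat C
  \<and> (\<forall>\<alpha>. lin_functor C C (aO \<alpha>) (aM \<alpha>))
  \<and> (\<forall>x. aO 0 x = x)
  \<and> (\<forall>\<alpha> \<beta> x. aO (\<alpha> + \<beta>) x = aO \<alpha> (aO \<beta> x))
  \<and> (\<forall>x y. \<forall>f\<in>Hom C x y. aM 0 x y f = f)
  \<and> (\<forall>\<alpha> \<beta> x y. \<forall>f\<in>Hom C x y.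
        aM (\<alpha> + \<beta>) x y f = aM \<alpha> (aO \<beta> x) (aO \<beta> y) (aM \<beta> x y f))"

definition weq_functor ::
  "('o1, 'm1::ab_group_add, 'k) lincat \<Rightarrow> ('g::group_add \<Rightarrow> 'o1 \<Rightarrow> 'o1)
   \<Rightarrow> ('g \<Rightarrow> 'o1 \<Rightarrow> 'o1 \<Rightarrow> 'm1 \<Rightarrow> 'm1)
   \<Rightarrow> ('o2, 'm2::ab_group_add, 'k) lincat \<Rightarrow> ('g \<Rightarrow> 'o2 \<Rightarrow> 'o2)
   \<Rightarrow> ('g \<Rightarrow> 'o2 \<Rightarrow> 'o2 \<Rightarrow> 'm2 \<Rightarrow> 'm2)
   \<Rightarrow> ('o1 \<Rightarrow> 'o2) \<Rightarrow> ('o1 \<Rightarrow> 'o1 \<Rightarrow> 'm1 \<Rightarrow> 'm2) \<Rightarrow> ('g \<Rightarrow> 'o1 \<Rightarrow> 'm2) \<Rightarrow> bool" where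
  "weq_functor C aO aM D bO bM Fo Fm \<rho> \<longleftrightarrow> lin_functor C D Fo Fm
  \<and> (\<forall>\<alpha> x. is_iso D (bO \<alpha> (Fo x)) (Fo (aO \<alpha> x)) (\<rho> \<alpha> x))
  \<and> (\<forall>\<alpha> x y. \<forall>f\<in>Hom C x y.
        cmp D (Fm (aO \<alpha> x) (aO \<alpha> y) (aM \<alpha> x y f)) (\<rho> \<alpha> x)
      = cmp D (\<rho> \<alpha> y) (bM \<alpha> (Fo x) (Fo y) (Fm x y f)))
  \<and> (\<forall>\<alpha> \<beta> x. cmp D (\<rho> \<beta> (aO \<alpha> x)) (bM \<beta> (bO \<alpha> (Fo x)) (Fo (aO \<alpha> x)) (\<rho> \<alpha> x))
             = \<rho> (\<beta> + \<alpha>) x)"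

text \<open>A morphism x \<rightarrow> y is a family f with f (beta, alpha) = f_{beta,alpha}
  in C(alpha x, beta y), row- and column-finite, with f_{gamma beta, gamma alpha} = gamma(f_{beta,alpha}).\<close>

definition orb_hom ::
  "('o, 'm::ab_group_add, 'k) lincat \<Rightarrow> ('g::group_add \<Rightarrow> 'o \<Rightarrow> 'o)
   \<Rightarrow> ('g \<Rightarrow> 'o \<Rightarrow> 'o \<Rightarrow> 'm \<Rightarrow> 'm) \<Rightarrow> 'o \<Rightarrow> 'o \<Rightarrow> ('g \<times> 'g \<Rightarrow> 'm) set" where
  "orb_hom C aO aM x y = {f.
      (\<forall>\<alpha> \<beta>. f (\<beta>, \<alpha>) \<in> Hom C (aO \<alpha> x) (aO \<beta> y))
    \<and> (\<forall>\<alpha>. finite {\<beta>. f (\<beta>, \<alpha>) \<noteq> 0})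
    \<and> (\<forall>\<beta>. finite {\<alpha>. f (\<beta>, \<alpha>) \<noteq> 0})
    \<and> (\<forall>\<gamma> \<alpha> \<beta>. f (\<gamma> + \<beta>, \<gamma> + \<alpha>) = aM \<gamma> (aO \<alpha> x) (aO \<beta> y) (f (\<beta>, \<alpha>)))}"

definition orb_cmp ::
  "('o, 'm::ab_group_add, 'k) lincat \<Rightarrow> ('g \<times> 'g \<Rightarrow> 'm) \<Rightarrow> ('g \<times> 'g \<Rightarrow> 'm) \<Rightarrow> ('g \<times> 'g \<Rightarrow> 'm)" where
  "orb_cmp C g f = (\<lambda>(\<beta>, \<alpha>). \<Sum>\<gamma>\<in>{\<gamma>. f (\<gamma>, \<alpha>) \<noteq> 0}. cmp C (g (\<beta>, \<gamma>)) (f (\<gamma>, \<alpha>)))"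

definition orb_idt ::
  "('o, 'm::ab_group_add, 'k) lincat \<Rightarrow> ('g \<Rightarrow> 'o \<Rightarrow> 'o) \<Rightarrow> 'o \<Rightarrow> ('g \<times> 'g \<Rightarrow> 'm)" where
  "orb_idt C aO x = (\<lambda>(\<beta>, \<alpha>). if \<beta> = \<alpha> then idt C (aO \<alpha> x) else 0)"

definition orbit_cat ::
  "('o, 'm::ab_group_add, 'k) lincat \<Rightarrow> ('g::group_add \<Rightarrow> 'o \<Rightarrow> 'o)
   \<Rightarrow> ('g \<Rightarrow> 'o \<Rightarrow> 'o \<Rightarrow> 'm \<Rightarrow> 'm) \<Rightarrow> ('o, 'g \<times> 'g \<Rightarrow> 'm, 'k) lincat" where
  "orbit_cat C aO aM =
     \<lparr> Hom = orb_hom C aO aM, cmp = orb_cmp C, idt = orb_idt C aO,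
       scl = (\<lambda>a f i. scl C a (f i)) \<rparr>"

text \<open>P^(1)_{x,y} applied to a homogeneous element g of degree delta, g in C(delta x, y):
  the family (mu(f_{mu^-1 lambda}))_{(lambda,mu)}, i.e. entry (mu, lambda) is mu(g) if
  mu^-1 lambda = delta, and 0 otherwise.\<close>

definition orb_P1 ::
  "('g::group_add \<Rightarrow> 'o \<Rightarrow> 'o) \<Rightarrow> ('g \<Rightarrow> 'o \<Rightarrow> 'o \<Rightarrow> 'm::ab_group_add \<Rightarrow> 'm)
   \<Rightarrow> 'g \<Rightarrow> 'o \<Rightarrow> 'o \<Rightarrow> 'm \<Rightarrow> ('g \<times> 'g \<Rightarrow> 'm)" where
  "orb_P1 aO aM \<delta> x y g =
     (\<lambda>(\<mu>, \<nu>). if - \<mu> + \<nu> = \<delta> then aM \<mu> (aO \<delta> x) y g else 0)"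

definition orb_grade ::
  "('o, 'm::ab_group_add, 'k) lincat \<Rightarrow> ('g::group_add \<Rightarrow> 'o \<Rightarrow> 'o)
   \<Rightarrow> ('g \<Rightarrow> 'o \<Rightarrow> 'o \<Rightarrow> 'm \<Rightarrow> 'm) \<Rightarrow> 'g \<Rightarrow> 'o \<Rightarrow> 'o \<Rightarrow> ('g \<times> 'g \<Rightarrow> 'm) set" where
  "orb_grade C aO aM \<delta> x y = orb_P1 aO aM \<delta> x y ` Hom C (aO \<delta> x) y"

text \<open>Smash product of a G-graded category B (grading given by grade delta x y):
  objects x^(alpha) = (x, alpha), (B#G)(x^(alpha), y^(beta)) = B^{beta^-1 alpha}(x,y).\<close>

definition smash ::
  "('o, 'm, 'k) lincat \<Rightarrow> ('g::group_add \<Rightarrow> 'o \<Rightarrow> 'o \<Rightarrow> 'm set) \<Rightarrow> ('o \<times> 'g, 'm, 'k) lincat" where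
  "smash B grade =
     \<lparr> Hom = (\<lambda>(x, \<alpha>) (y, \<beta>). grade (- \<beta> + \<alpha>) x y), cmp = cmp B,
       idt = (\<lambda>(x, \<alpha>). idt B x), scl = scl B \<rparr>"

definition smash_orbit ::
  "('o, 'm::ab_group_add, 'k) lincat \<Rightarrow> ('g::group_add \<Rightarrow> 'o \<Rightarrow> 'o)
   \<Rightarrow> ('g \<Rightarrow> 'o \<Rightarrow> 'o \<Rightarrow> 'm \<Rightarrow> 'm) \<Rightarrow> ('o \<times> 'g, 'g \<times> 'g \<Rightarrow> 'm, 'k) lincat" where
  "smash_orbit C aO aM = smash (orbit_cat C aO aM) (orb_grade C aO aM)"

definition smash_actO :: "'g::group_add \<Rightarrow> 'o \<times> 'g \<Rightarrow> 'o \<times> 'g" where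
  "smash_actO \<mu> X = (fst X, \<mu> + snd X)"

definition smash_actM :: "'g \<Rightarrow> 'o \<times> 'g \<Rightarrow> 'o \<times> 'g \<Rightarrow> 'm \<Rightarrow> 'm" where
  "smash_actM \<mu> X Y f = f"

end

theory Submission
  imports Defs
begin

(* The orbit category C/G is G-graded, with (C/G)^d(x,y) = P1_d(C(d x, y)), and the whole proof
   rests on one formula for composing homogeneous morphisms (lemma P1_comp):
     P1_d2(g) o P1_d1(f) = P1_(d2 d1)(g o d2(f)).
   With it the smash product D = (C/G)#G is computed explicitly and we exhibit
   - the embedding F : C -> D, x |-> x^(1), f |-> P1_1(f), a linear functor;
   - the quasi-inverse H : D -> C, x^(a) |-> a x, g |-> g(b,a) for g : x^(a) -> y^(b);
   - the isomorphisms rho_a(x) = P1_a(id_(a x)) : x^(a) -> (a x)^(1), inverse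
     sigma_a(x) = P1_(a^-1)(id_x), which are natural in x^(a).
   Then H F = Id on the nose (unit = identities), sigma is the counit F H => Id, and rho
   makes F weakly G-equivariant for the free action on D, because F(a f) o rho_a = rho_a o f
   and rho_b(a x) o rho_a(x) = rho_(b a)(x) are instances of P1_comp. *)

lemma neg_add_eq_iff_eq_add: "- a + b = c \<longleftrightarrow> b = a + (c::'g::group_add)"
  by (metis add_minus_cancel minus_add_cancel)

locale G_category =
  fixes C :: "('o, 'm::ab_group_add, 'k::comm_ring_1) lincat"
    and aO :: "'g::group_add \<Rightarrow> 'o \<Rightarrow> 'o"
    and aM :: "'g \<Rightarrow> 'o \<Rightarrow> 'o \<Rightarrow> 'm \<Rightarrow> 'm"
  assumes G_cat: "Gcat C aO aM"
begin

lemma linear_cat: "lincat C"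
  using G_cat unfolding Gcat_def by auto

lemma zero_hom: "0 \<in> Hom C x y"
  and idt_hom: "idt C x \<in> Hom C x x"
  and scl_add: "f \<in> Hom C x y \<Longrightarrow> g \<in> Hom C x y \<Longrightarrow> scl C c (f + g) = scl C c f + scl C c g"
  and cmp_idl: "f \<in> Hom C x y \<Longrightarrow> cmp C (idt C y) f = f"
  and cmp_idr: "f \<in> Hom C x y \<Longrightarrow> cmp C f (idt C x) = f"
  and cmp_addl: "f \<in> Hom C x y \<Longrightarrow> g \<in> Hom C y z \<Longrightarrow> g' \<in> Hom C y z \<Longrightarrow>
                   cmp C (g + g') f = cmp C g f + cmp C g' f"
  and cmp_addr: "f \<in> Hom C x y \<Longrightarrow> f' \<in> Hom C x y \<Longrightarrow> g \<in> Hom C y z \<Longrightarrow>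
                   cmp C g (f + f') = cmp C g f + cmp C g f'"
  using linear_cat unfolding lincat_def by auto

text \<open>Bilinearity forces the zero morphism to be absorbing and scalars to fix it.\<close>

lemma cmp_zero_right: "g \<in> Hom C y z \<Longrightarrow> cmp C g 0 = 0"
  using cmp_addr[OF zero_hom zero_hom, of g] by simp

lemma cmp_zero_left: "f \<in> Hom C x y \<Longrightarrow> cmp C 0 f = 0"
  using cmp_addl[OF _ zero_hom zero_hom, of f] by simp

lemma scl_zero: "scl C c 0 = 0"
  using scl_add[OF zero_hom zero_hom, where c=c] by simp

lemma cmp_idt_idt [simp]: "cmp C (idt C x) (idt C x) = idt C x"
  by (rule cmp_idl[OF idt_hom])

lemma act_hom: "f \<in> Hom C x y \<Longrightarrow> aM a x y f \<in> Hom C (aO a x) (aO a y)"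
  and act_cmp: "f \<in> Hom C x y \<Longrightarrow> g \<in> Hom C y z \<Longrightarrow>
                  aM a x z (cmp C g f) = cmp C (aM a y z g) (aM a x y f)"
  and act_idt: "aM a x x (idt C x) = idt C (aO a x)"
  and act_add: "f \<in> Hom C x y \<Longrightarrow> g \<in> Hom C x y \<Longrightarrow> aM a x y (f + g) = aM a x y f + aM a x y g"
  and act_scl: "f \<in> Hom C x y \<Longrightarrow> aM a x y (scl C c f) = scl C c (aM a x y f)"
  using G_cat unfolding Gcat_def lin_functor_def by auto

lemma act_obj_zero [simp]: "aO 0 x = x"
  and act_obj_add: "aO (a + b) x = aO a (aO b x)"
  and act_zero: "f \<in> Hom C x y \<Longrightarrow> aM 0 x y f = f"
  and act_add_group: "f \<in> Hom C x y \<Longrightarrow> aM (a + b) x y f = aM a (aO b x) (aO b y) (aM b x y f)"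
  using G_cat unfolding Gcat_def by auto

lemma act_obj_neg [simp]: "aO (- a) (aO a x) = x"
  by (simp add: act_obj_add[symmetric])

abbreviation P1 :: "'g \<Rightarrow> 'o \<Rightarrow> 'o \<Rightarrow> 'm \<Rightarrow> 'g \<times> 'g \<Rightarrow> 'm" where
  "P1 \<equiv> orb_P1 aO aM"

lemma P1_entry_hom:
  "f \<in> Hom C (aO d x) y \<Longrightarrow> P1 d x y f (b, a) \<in> Hom C (aO b (aO d x)) (aO b y)"
  by (auto simp: orb_P1_def zero_hom act_hom)

lemma P1_entry_diag: "P1 d x y f (b, b + d) = aM b (aO d x) y f"
  by (simp add: orb_P1_def)

lemma orb_idt_P1: "orb_idt C aO x = P1 0 x x (idt C x)"
  by (rule ext) (auto simp: orb_idt_def orb_P1_def act_idt neg_add_eq_iff_eq_add)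

lemma orb_cmp_single_row:
  assumes "\<And>c'. f (c', a) \<noteq> 0 \<Longrightarrow> c' = c"
    and "f (c, a) = 0 \<Longrightarrow> cmp C (g (b, c)) 0 = 0"
  shows "orb_cmp C g f (b, a) = cmp C (g (b, c)) (f (c, a))"
proof (cases "f (c, a) = 0")
  case True
  then have "{c'. f (c', a) \<noteq> 0} = {}" using assms(1) by blast
  then show ?thesis using True assms(2) by (simp add: orb_cmp_def)
next
  case False
  then have "{c'. f (c', a) \<noteq> 0} = {c}" using assms(1) by blast
  then show ?thesis by (simp add: orb_cmp_def)
qed

lemma P1_comp:
  assumes g: "g \<in> Hom C (aO d2 y) z" and f: "f \<in> Hom C (aO d1 x) y"
  shows "orb_cmp C (P1 d2 y z g) (P1 d1 x y f) = P1 (d2 + d1) x z (cmp C g (aM d2 (aO d1 x) y f))"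
proof (rule ext, clarify)
  fix b a
  let ?c = "a - d1"
  have supp: "c' = ?c" if "P1 d1 x y f (c', a) \<noteq> 0" for c'
    using that by (auto simp: orb_P1_def neg_add_eq_iff_eq_add eq_diff_eq split: if_splits)
  have col: "orb_cmp C (P1 d2 y z g) (P1 d1 x y f) (b, a)
           = cmp C (P1 d2 y z g (b, ?c)) (aM ?c (aO d1 x) y f)"
  proof -
    have "orb_cmp C (P1 d2 y z g) (P1 d1 x y f) (b, a) = cmp C (P1 d2 y z g (b, ?c)) (P1 d1 x y f (?c, a))"
      using supp cmp_zero_right[OF P1_entry_hom[OF g]] by (rule orb_cmp_single_row)
    moreover have "P1 d1 x y f (?c, a) = aM ?c (aO d1 x) y f"
      by (simp add: orb_P1_def)
    ultimately show ?thesis by simp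
  qed
  have deg: "- b + ?c = d2 \<longleftrightarrow> - b + a = d2 + d1"
    by (simp add: add_diff_eq diff_eq_eq)
  show "orb_cmp C (P1 d2 y z g) (P1 d1 x y f) (b, a) = P1 (d2 + d1) x z (cmp C g (aM d2 (aO d1 x) y f)) (b, a)"
  proof (cases "- b + a = d2 + d1")
    case True
    then have c: "?c = b + d2" using deg neg_add_eq_iff_eq_add by blast
    have "cmp C (P1 d2 y z g (b, ?c)) (aM ?c (aO d1 x) y f)
        = cmp C (aM b (aO d2 y) z g) (aM b (aO d2 (aO d1 x)) (aO d2 y) (aM d2 (aO d1 x) y f))"
      unfolding c P1_entry_diag act_add_group[OF f] ..
    also have "\<dots> = aM b (aO d2 (aO d1 x)) z (cmp C g (aM d2 (aO d1 x) y f))"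
      using act_cmp[OF act_hom[OF f] g] by simp
    finally show ?thesis using col True by (simp add: orb_P1_def act_obj_add)
  next
    case False
    then show ?thesis
      using col deg cmp_zero_left[OF act_hom[OF f]] by (simp add: orb_P1_def)
  qed
qed

abbreviation D :: "('o \<times> 'g, 'g \<times> 'g \<Rightarrow> 'm, 'k) lincat" where
  "D \<equiv> smash_orbit C aO aM"

lemma D_Hom: "Hom D (x, a) (y, b) = P1 (- b + a) x y ` Hom C (aO (- b + a) x) y"
  and D_cmp: "cmp D = orb_cmp C"
  and D_idt: "idt D (x, a) = orb_idt C aO x"
  and D_scl: "scl D c g = (\<lambda>i. scl C c (g i))"
  by (simp_all add: smash_orbit_def smash_def orbit_cat_def orb_grade_def)

lemma D_hom_cases:
  assumes "g \<in> Hom D (x, a) (y, b)"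
  obtains g0 where "g0 \<in> Hom C (aO (- b + a) x) y" and "g = P1 (- b + a) x y g0"
  using assms unfolding D_Hom by blast

abbreviation F_obj :: "'o \<Rightarrow> 'o \<times> 'g" where
  "F_obj x \<equiv> (x, 0)"

abbreviation F_hom :: "'o \<Rightarrow> 'o \<Rightarrow> 'm \<Rightarrow> 'g \<times> 'g \<Rightarrow> 'm" where
  "F_hom \<equiv> P1 0"

lemma F_functor: "lin_functor C D F_obj F_hom"
  unfolding lin_functor_def
proof (intro conjI allI ballI)
  fix x y z f g assume f: "f \<in> Hom C x y" and g: "g \<in> Hom C y z"
  show "P1 0 x z (cmp C g f) = cmp D (P1 0 y z g) (P1 0 x y f)"
    using P1_comp[of g 0 y z f 0 x] f g by (simp add: act_zero D_cmp)
next
  fix a x y f assume "f \<in> Hom C x y"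
  then show "P1 0 x y (scl C a f) = scl D a (P1 0 x y f)"
    by (auto simp: orb_P1_def act_scl D_scl scl_zero)
qed (auto simp: D_Hom D_idt orb_idt_P1 orb_P1_def act_add)

text \<open>It is a functor because a morphism of \<open>D\<close> has exactly one
  nonzero row in each column.\<close>

abbreviation H_obj :: "'o \<times> 'g \<Rightarrow> 'o" where
  "H_obj u \<equiv> aO (snd u) (fst u)"

abbreviation H_hom :: "'o \<times> 'g \<Rightarrow> 'o \<times> 'g \<Rightarrow> ('g \<times> 'g \<Rightarrow> 'm) \<Rightarrow> 'm" where
  "H_hom u v g \<equiv> g (snd v, snd u)"

lemma D_hom_entry_hom:
  assumes "g \<in> Hom D (x, a) (y, b)"
  shows "g (b, a) \<in> Hom C (aO a x) (aO b y)"
proof -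
  obtain g0 where g0: "g0 \<in> Hom C (aO (- b + a) x) y" and ge: "g = P1 (- b + a) x y g0"
    using D_hom_cases[OF assms] .
  have "aO b (aO (- b + a) x) = aO a x"
    by (simp add: act_obj_add[symmetric])
  then show ?thesis
    using act_hom[OF g0, of b] by (simp add: ge orb_P1_def)
qed

lemma D_hom_column:
  "g \<in> Hom D (x, a) (y, b) \<Longrightarrow> g (c, a) \<noteq> 0 \<Longrightarrow> c = b"
  by (erule D_hom_cases) (auto simp: orb_P1_def split: if_splits)

lemma H_functor: "lin_functor D C H_obj H_hom"
  unfolding lin_functor_def split_paired_All
proof (intro conjI allI ballI)
  fix x a y b z c f g assume f: "f \<in> Hom D (x, a) (y, b)" and g: "g \<in> Hom D (y, b) (z, c)"
  have "orb_cmp C g f (c, a) = cmp C (g (c, b)) (f (b, a))"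
    by (rule orb_cmp_single_row) (use D_hom_column[OF f] cmp_zero_right[OF D_hom_entry_hom[OF g]] in auto)
  then show "H_hom (x, a) (z, c) (cmp D g f) = cmp C (H_hom (y, b) (z, c) g) (H_hom (x, a) (y, b) f)"
    by (simp add: D_cmp)
qed (auto simp: D_hom_entry_hom D_idt orb_idt_def D_scl)

definition rho :: "'g \<Rightarrow> 'o \<Rightarrow> 'g \<times> 'g \<Rightarrow> 'm" where
  "rho a x = P1 a x (aO a x) (idt C (aO a x))"

definition sigma :: "'g \<Rightarrow> 'o \<Rightarrow> 'g \<times> 'g \<Rightarrow> 'm" where
  "sigma a x = P1 (- a) (aO a x) x (idt C x)"

lemma rho_hom: "rho a x \<in> Hom D (x, a) (aO a x, 0)"
  unfolding D_Hom rho_def by (simp add: idt_hom)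

lemma sigma_hom: "sigma a x \<in> Hom D (aO a x, 0) (x, a)"
  unfolding D_Hom sigma_def by (simp add: idt_hom)

lemma idt_hom_neg: "idt C x \<in> Hom C (aO (- a) (aO a x)) x"
  by (simp add: idt_hom)

lemma sigma_rho: "cmp D (sigma a x) (rho a x) = idt D (x, a)"
  unfolding D_cmp D_idt sigma_def rho_def P1_comp[OF idt_hom_neg idt_hom]
  by (simp add: act_idt cmp_idl idt_hom orb_idt_P1)

lemma rho_sigma: "cmp D (rho a x) (sigma a x) = idt D (aO a x, 0)"
  unfolding D_cmp D_idt sigma_def rho_def P1_comp[OF idt_hom idt_hom_neg]
  by (simp add: act_idt cmp_idl idt_hom orb_idt_P1)

lemma rho_iso: "is_iso D (x, a) (aO a x, 0) (rho a x)"
  unfolding is_iso_def using rho_hom sigma_hom sigma_rho rho_sigma by blast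

lemma sigma_iso: "is_iso D (aO a x, 0) (x, a) (sigma a x)"
  unfolding is_iso_def using rho_hom sigma_hom sigma_rho rho_sigma by blast

text \<open>Every morphism of \<open>D\<close> is conjugate, via \<open>\<sigma>\<close>, to its image under \<open>F H\<close>; this is the
  naturality of the counit \<open>\<sigma> : F H \<Rightarrow> Id\<close>.\<close>

lemma sigma_natural:
  assumes g: "g \<in> Hom D (x, a) (y, b)"
  shows "cmp D g (sigma a x) = cmp D (sigma b y) (F_hom (aO a x) (aO b y) (g (b, a)))"
proof -
  obtain g0 where g0: "g0 \<in> Hom C (aO (- b + a) x) y" and ge: "g = P1 (- b + a) x y g0"
    using D_hom_cases[OF g] .
  have "cmp D g (sigma a x) = P1 (- b + a + - a) (aO a x) y (cmp C g0 (aM (- b + a) x x (idt C x)))"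
    unfolding D_cmp sigma_def ge P1_comp[OF g0 idt_hom_neg] by simp
  also have "\<dots> = P1 (- b) (aO a x) y g0"
    using g0 by (simp add: act_idt cmp_idr add.assoc)
  finally have lhs: "cmp D g (sigma a x) = P1 (- b) (aO a x) y g0" .
  have gba: "g (b, a) = aM b (aO (- b + a) x) y g0"
    using P1_entry_diag[of "- b + a" x y g0 b] by (simp add: ge)
  have g0_recovered: "aM (- b) (aO a x) (aO b y) (g (b, a)) = g0"
    using act_add_group[OF g0, of "- b" b] act_zero[OF g0] by (simp add: gba act_obj_add[symmetric])
  have "cmp D (sigma b y) (P1 0 (aO a x) (aO b y) (g (b, a)))
      = P1 (- b + 0) (aO a x) y (cmp C (idt C y) (aM (- b) (aO a x) (aO b y) (g (b, a))))"
    unfolding D_cmp sigma_def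
    using P1_comp[of "idt C y" "- b" "aO b y" y "g (b, a)" 0 "aO a x"] D_hom_entry_hom[OF g]
    by (simp add: idt_hom)
  also have "\<dots> = P1 (- b) (aO a x) y g0"
    using g0 by (simp add: g0_recovered cmp_idl)
  finally show ?thesis using lhs by simp
qed

lemma unit_iso:
  "nat_iso C C (\<lambda>x. x) (\<lambda>x y f. f) (\<lambda>x. H_obj (F_obj x))
     (\<lambda>x y f. H_hom (F_obj x) (F_obj y) (F_hom x y f)) (\<lambda>x. idt C x)"
  unfolding nat_iso_def is_iso_def
  by (auto simp: idt_hom cmp_idl cmp_idr orb_P1_def act_zero intro!: bexI[of _ "idt C _"])

lemma counit_iso:
  "nat_iso D D (\<lambda>u. F_obj (H_obj u)) (\<lambda>u v g. F_hom (H_obj u) (H_obj v) (H_hom u v g))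
     (\<lambda>u. u) (\<lambda>u v g. g) (\<lambda>u. sigma (snd u) (fst u))"
  unfolding nat_iso_def split_paired_All using sigma_iso sigma_natural by simp

lemma F_equivalence: "equivalence C D F_obj F_hom"
  unfolding equivalence_def using F_functor H_functor unit_iso counit_iso by blast

lemma rho_natural:
  assumes f: "f \<in> Hom C x y"
  shows "cmp D (F_hom (aO a x) (aO a y) (aM a x y f)) (rho a x) = cmp D (rho a y) (F_hom x y f)"
proof -
  have af: "aM a x y f \<in> Hom C (aO a x) (aO a y)" using act_hom[OF f] .
  have "cmp D (F_hom (aO a x) (aO a y) (aM a x y f)) (rho a x)
      = P1 (0 + a) x (aO a y) (cmp C (aM a x y f) (aM 0 (aO a x) (aO a x) (idt C (aO a x))))"
    unfolding D_cmp rho_def using P1_comp[of "aM a x y f" 0 "aO a x" "aO a y" "idt C (aO a x)" a x] af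
    by (simp add: idt_hom)
  also have "\<dots> = P1 a x (aO a y) (aM a x y f)"
    by (simp add: act_zero idt_hom cmp_idr[OF af])
  also have "\<dots> = P1 (a + 0) x (aO a y) (cmp C (idt C (aO a y)) (aM a (aO 0 x) y f))"
    by (simp add: cmp_idl[OF af])
  also have "\<dots> = cmp D (rho a y) (F_hom x y f)"
    unfolding D_cmp rho_def using P1_comp[of "idt C (aO a y)" a y "aO a y" f 0 x] f
    by (simp add: idt_hom)
  finally show ?thesis .
qed

lemma rho_cocycle: "cmp D (rho b (aO a x)) (rho a x) = rho (b + a) x"
proof -
  have "cmp D (rho b (aO a x)) (rho a x)
      = P1 (b + a) x (aO b (aO a x)) (cmp C (idt C (aO b (aO a x))) (aM b (aO a x) (aO a x) (idt C (aO a x))))"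
    unfolding D_cmp rho_def by (rule P1_comp[OF idt_hom idt_hom])
  also have "\<dots> = rho (b + a) x"
    by (simp add: act_idt idt_hom cmp_idl rho_def act_obj_add)
  finally show ?thesis .
qed

lemma F_weakly_equivariant:
  "weq_functor C aO aM D smash_actO smash_actM F_obj F_hom rho"
  unfolding weq_functor_def smash_actO_def smash_actM_def
  using F_functor rho_iso rho_natural rho_cocycle by simp

end

theorem mainTheorem13:
  fixes C :: "('o, 'm::ab_group_add, 'k::comm_ring_1) lincat"
    and aO :: "'g::group_add \<Rightarrow> 'o \<Rightarrow> 'o"
    and aM :: "'g \<Rightarrow> 'o \<Rightarrow> 'o \<Rightarrow> 'm \<Rightarrow> 'm"
  assumes "Gcat C aO aM"
  shows "\<exists>Fo Fm \<rho>.
           weq_functor C aO aM (smash_orbit C aO aM) smash_actO smash_actM Fo Fm \<rho>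
         \<and> equivalence C (smash_orbit C aO aM) Fo Fm"
proof -
  interpret G_category C aO aM by (rule G_category.intro[OF assms])
  show ?thesis using F_weakly_equivariant F_equivalence by blast
qed

end
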